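(* Let $D\in\mathbb{N}_1$ and let $\pi^+_D:=\sum_{n\in\mathcal{N}^g,\ \ell(n)\le D}\pi(n)$. Then the expected number of node expansions of $\mathrm{multiTS}(\infty,D)$ before (and including) reaching a node of $\mathcal{N}^g$ satisfies $$\mathbb{E}\bigl[N(\mathrm{multiTS}(\infty,D),\mathcal{N}^g)\bigr]\le \frac{D}{\pi^+_D}.$$
   Context: Setting: a finite action set $\mathcal{A}$, a set of states $\mathcal{S}$ with initial state $s_0$, a deterministic transition function $T:\mathcal{S}\times\mathcal{A}\to\mathcal{S}$, and a set of goal states $\mathcal{G}\subseteq\mathcal{S}$. Nodes are finite sequences of actions; the root $n_0$ is the empty sequence; $T(n)$ is the state reached from $s_0$ by applying the actions of $n$; for a node of $t$ actions, $\ell(n):=t+1$. A policy is a function $\pi$ from nodes to $[0,1]$ with $\pi(n_0)=1$ and $\pi(n)=\sum_{a\in\mathcal{A}}\pi(na)$, with conditional probabilities $\pi(a\mid n)=\pi(na)/\pi(n)$. The target set $\mathcal{N}^g$ is the set of nodes $n$ with $T(n)\in\mathcal{G}$ such that no proper prefix $m$ of $n$ has $T(m)\in\mathcal{G}$. A trial of depth $D$ samples a path $m_1=n_0, m_2=m_1a_1, \dots, m_D=m_{D-1}a_{D-1}$ with $a_i\sim\pi(\cdot\mid m_i)$ and tests $m_1,m_2,\dots$ in order, each test counting as one node expansion, stopping with success at the first $m_i$ with $T(m_i)\in\mathcal{G}$. $\mathrm{multiTS}(\infty,D)$ repeats independent trials of depth $D$ until a success; $N(\mathrm{multiTS}(\infty,D),\mathcal{N}^g)$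 is the total number of node expansions over all trials until success. (If $\pi^+_D=0$ the bound is $+\infty$.) *)

theory Defs
  imports "HOL-Probability.Probability" "HOL-Library.Sublist"
begin

text \<open>Nodes are action lists; appending action a to node n is n @ [a].
  T(n) is the state reached from s0 by applying the actions of n.\<close>

definition node_state :: "('s \<Rightarrow> 'a \<Rightarrow> 's) \<Rightarrow> 's \<Rightarrow> 'a list \<Rightarrow> 's" where
  "node_state T s0 n = foldl T s0 n"

definition ell :: "'a list \<Rightarrow> nat" where
  "ell n = length n + 1"

definition is_policy :: "('a::finite list \<Rightarrow> real) \<Rightarrow> bool" where
  "is_policy \<pi> \<longleftrightarrow> \<pi> [] = 1 \<and> (\<forall>n. 0 \<le> \<pi> n \<and> \<pi> n \<le> 1)
     \<and> (\<forall>n. \<pi> n = (\<Sum>a\<in>UNIV. \<pi> (n @ [a])))"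

definition target_set :: "('s \<Rightarrow> 'a \<Rightarrow> 's) \<Rightarrow> 's \<Rightarrow> 's set \<Rightarrow> 'a list set" where
  "target_set T s0 G = {n. node_state T s0 n \<in> G \<and>
     (\<forall>m. strict_prefix m n \<longrightarrow> node_state T s0 m \<notin> G)}"

text \<open>Conditional distribution pi(. | n); on nodes of probability 0 (never reached)
  an arbitrary (uniform) distribution is used.\<close>
definition cond_pmf :: "('a::finite list \<Rightarrow> real) \<Rightarrow> 'a list \<Rightarrow> 'a pmf" where
  "cond_pmf \<pi> n = embed_pmf (\<lambda>a. if \<pi> n = 0 then 1 / real CARD('a) else \<pi> (n @ [a]) / \<pi> n)"

fun sample_path :: "('a::finite list \<Rightarrow> real) \<Rightarrow> 'a list \<Rightarrow> nat \<Rightarrow> 'a list pmf" where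
  "sample_path \<pi> n 0 = return_pmf n"
| "sample_path \<pi> n (Suc k) = bind_pmf (cond_pmf \<pi> n) (\<lambda>a. sample_path \<pi> (n @ [a]) k)"

text \<open>A trial of depth D samples the path m_1 = [], ..., m_D (D-1 actions);
  the tested nodes are m_(i+1) = take i p for i < D.\<close>
definition trial_pmf :: "('a::finite list \<Rightarrow> real) \<Rightarrow> nat \<Rightarrow> 'a list pmf" where
  "trial_pmf \<pi> D = sample_path \<pi> [] (D - 1)"

definition trial_success :: "('s \<Rightarrow> 'a \<Rightarrow> 's) \<Rightarrow> 's \<Rightarrow> 's set \<Rightarrow> nat \<Rightarrow> 'a list \<Rightarrow> bool" where
  "trial_success T s0 G D p \<longleftrightarrow> (\<exists>i<D. node_state T s0 (take i p) \<in> G)"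

definition trial_cost :: "('s \<Rightarrow> 'a \<Rightarrow> 's) \<Rightarrow> 's \<Rightarrow> 's set \<Rightarrow> nat \<Rightarrow> 'a list \<Rightarrow> nat" where
  "trial_cost T s0 G D p =
     (if trial_success T s0 G D p
      then Suc (LEAST i. i < D \<and> node_state T s0 (take i p) \<in> G)
      else D)"

text \<open>Total number of node expansions of multiTS(infinity, D) on a stream of
  independent trial paths, until (and including) the first successful trial.\<close>
definition multiTS_expansions ::
  "('s \<Rightarrow> 'a \<Rightarrow> 's) \<Rightarrow> 's \<Rightarrow> 's set \<Rightarrow> nat \<Rightarrow> 'a list stream \<Rightarrow> ennreal" where
  "multiTS_expansions T s0 G D \<omega> =
     (if \<exists>k. trial_success T s0 G D (\<omega> !! k)
      then (\<Sum>j\<le>(LEAST k. trial_success T s0 G D (\<omega> !! k)).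
              of_nat (trial_cost T s0 G D (\<omega> !! j)))
      else \<infinity>)"

definition pi_plus ::
  "('a::finite list \<Rightarrow> real) \<Rightarrow> ('s \<Rightarrow> 'a \<Rightarrow> 's) \<Rightarrow> 's \<Rightarrow> 's set \<Rightarrow> nat \<Rightarrow> real" where
  "pi_plus \<pi> T s0 G D = (\<Sum>n\<in>{n\<in>target_set T s0 G. ell n \<le> D}. \<pi> n)"

end

theory Submission
  imports Defs
begin

text \<open>A trial whose path passes through a target node n with ell n \<le> D succeeds;
  the path passes through n with probability \<pi> n, and for distinct targets these
  events are disjoint because no target is a proper prefix of another. Hence every
  trial succeeds with probability q \<ge> pi_plus. Each trial costs at most D
  expansions, and the number of independent trials up to the first success has
  expectation 1/q, so the expected total cost is at most D/q \<le> D/pi_plus.\<close>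

text \<open>The number of draws up to and including the first one outside F, in tail-sum form
  (the k-th summand indicates that the first k draws lie in F), so that for i.i.d. draws
  its expectation is a geometric series.\<close>
definition waiting_time :: "'b set \<Rightarrow> 'b stream \<Rightarrow> ennreal" where
  "waiting_time F \<omega> = (\<Sum>k. \<Prod>j<k. indicator F (\<omega> !! j))"

lemma waiting_time_eq:
  "waiting_time F \<omega> =
     (if \<exists>k. \<omega> !! k \<notin> F then of_nat (Suc (LEAST k. \<omega> !! k \<notin> F)) else \<infinity>)"
proof (cases "\<exists>k. \<omega> !! k \<notin> F")
  case True
  define K where "K = (LEAST k. \<omega> !! k \<notin> F)"
  have "\<omega> !! K \<notin> F"
    unfolding K_def using True by (rule LeastI_ex)
  moreover have "\<omega> !! j \<in> F" if "j < K" for j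
    using not_less_Least[OF that[unfolded K_def]] by blast
  ultimately have "(\<Prod>j<k. indicator F (\<omega> !! j) :: ennreal) = (if k \<le> K then 1 else 0)" for k
    by (auto intro!: prod.neutral bexI[of _ K] simp: not_le)
  then have "waiting_time F \<omega> = (\<Sum>k\<le>K. 1)"
    unfolding waiting_time_def by (subst suminf_finite[of "{..K}"]) auto
  with True show ?thesis
    by (simp add: K_def)
next
  case False
  then have "(\<Prod>j<k. indicator F (\<omega> !! j) :: ennreal) = ennreal 1" for k
    by (auto intro!: prod.neutral)
  moreover have "(\<Sum>k. ennreal 1) = \<infinity>"
    using summable_iff_suminf_neq_top[of "\<lambda>_. 1"] by (simp add: summable_const_iff)
  ultimately show ?thesis
    using False by (simp add: waiting_time_def)
qed

lemma measurable_prod_indicator_snth: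
  assumes "F \<in> sets M"
  shows "(\<lambda>\<omega>. \<Prod>j<k. indicator F (\<omega> !! j) :: ennreal) \<in> borel_measurable (stream_space M)"
  by (intro borel_measurable_prod_ennreal measurable_compose[OF measurable_snth]
      borel_measurable_indicator assms)

lemma measurable_waiting_time:
  "F \<in> sets M \<Longrightarrow> waiting_time F \<in> borel_measurable (stream_space M)"
  unfolding waiting_time_def
  by (intro borel_measurable_suminf_order measurable_prod_indicator_snth)

lemma (in prob_space) nn_integral_prod_indicator_snth:
  assumes "F \<in> sets M"
  shows "(\<integral>\<^sup>+\<omega>. (\<Prod>j<k. indicator F (\<omega> !! j)) \<partial>stream_space M) = emeasure M F ^ k"
proof (induction k)
  case 0
  show ?case
    by (simp add: prob_space.emeasure_space_1[OF prob_space_stream_space])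
next
  case (Suc k)
  have shift: "(\<Prod>j<Suc k. indicator F ((x ## \<omega>) !! j)) =
      indicator F x * (\<Prod>j<k. indicator F (\<omega> !! j) :: ennreal)" for x \<omega>
    by (simp only: prod.lessThan_Suc_shift snth.simps stream.sel)
  have "(\<integral>\<^sup>+\<omega>. (\<Prod>j<Suc k. indicator F (\<omega> !! j)) \<partial>stream_space M)
      = (\<integral>\<^sup>+x. (\<integral>\<^sup>+\<omega>. indicator F x * (\<Prod>j<k. indicator F (\<omega> !! j)) \<partial>stream_space M) \<partial>M)"
    using assms
    by (subst nn_integral_stream_space) (simp_all only: shift measurable_prod_indicator_snth)
  also have "\<dots> = (\<integral>\<^sup>+x. emeasure M F ^ k * indicator F x \<partial>M)"
    using assms by (simp add: nn_integral_cmult Suc.IH mult.commute)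
  also have "\<dots> = emeasure M F ^ Suc k"
    by (subst nn_integral_cmult_indicator[OF assms]) (simp add: mult.commute)
  finally show ?case .
qed

lemma (in prob_space) nn_integral_waiting_time:
  assumes "F \<in> sets M" "prob F < 1"
  shows "(\<integral>\<^sup>+\<omega>. waiting_time F \<omega> \<partial>stream_space M) = ennreal (1 / (1 - prob F))"
proof -
  have "(\<integral>\<^sup>+\<omega>. waiting_time F \<omega> \<partial>stream_space M) = (\<Sum>k. ennreal (prob F ^ k))"
    using assms(1) unfolding waiting_time_def
    by (simp add: nn_integral_suminf nn_integral_prod_indicator_snth measurable_prod_indicator_snth
        emeasure_eq_measure ennreal_power)
  also have "\<dots> = ennreal (\<Sum>k. prob F ^ k)"
    using assms(2) by (simp add: suminf_ennreal2 summable_geometric)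
  also have "(\<Sum>k. prob F ^ k) = 1 / (1 - prob F)"
    using assms(2) by (simp add: suminf_geometric)
  finally show ?thesis .
qed

lemma policy_root: "is_policy \<pi> \<Longrightarrow> \<pi> [] = 1"
  unfolding is_policy_def by blast

lemma policy_nonneg: "is_policy \<pi> \<Longrightarrow> 0 \<le> \<pi> n"
  unfolding is_policy_def by blast

text \<open>The defining equation of a policy, oriented so that the simplifier does not loop on it.\<close>
lemma policy_sum_children: "is_policy \<pi> \<Longrightarrow> (\<Sum>a\<in>UNIV. \<pi> (n @ [a])) = \<pi> n"
  unfolding is_policy_def by metis

lemma policy_child_le:
  assumes "is_policy \<pi>"
  shows "\<pi> (n @ [a]) \<le> \<pi> n"
proof -
  have "\<pi> (n @ [a]) \<le> (\<Sum>b\<in>UNIV. \<pi> (n @ [b]))"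
    by (rule member_le_sum) (simp_all add: policy_nonneg[OF assms])
  also have "\<dots> = \<pi> n"
    by (rule policy_sum_children[OF assms])
  finally show ?thesis .
qed

lemma pmf_cond_pmf:
  fixes \<pi> :: "'a::finite list \<Rightarrow> real"
  assumes "is_policy \<pi>"
  shows "pmf (cond_pmf \<pi> n) a = (if \<pi> n = 0 then 1 / real CARD('a) else \<pi> (n @ [a]) / \<pi> n)"
proof -
  define f where "f = (\<lambda>a::'a. if \<pi> n = 0 then 1 / real CARD('a) else \<pi> (n @ [a]) / \<pi> n)"
  have nonneg: "0 \<le> f x" for x
    by (simp add: f_def policy_nonneg[OF assms])
  have "(\<Sum>x\<in>UNIV. f x) = 1"
  proof (cases "\<pi> n = 0")
    case False
    then have "(\<Sum>x\<in>UNIV. f x) = (\<Sum>x\<in>UNIV. \<pi> (n @ [x])) / \<pi> n"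
      by (simp add: f_def sum_divide_distrib)
    with False show ?thesis
      by (simp add: policy_sum_children[OF assms])
  qed (simp add: f_def)
  then have "(\<integral>\<^sup>+x. ennreal (f x) \<partial>count_space UNIV) = 1"
    by (simp add: nn_integral_count_space_finite nonneg)
  then show ?thesis
    unfolding cond_pmf_def f_def[symmetric]
    by (subst pmf_embed_pmf) (use nonneg in \<open>auto simp: f_def\<close>)
qed

lemma policy_mult_pmf_cond_pmf:
  assumes "is_policy \<pi>"
  shows "\<pi> n * pmf (cond_pmf \<pi> n) a = \<pi> (n @ [a])"
proof (cases "\<pi> n = 0")
  case True
  then show ?thesis
    using policy_child_le[OF assms, of n a] policy_nonneg[OF assms, of "n @ [a]"] by simp
qed (simp add: pmf_cond_pmf[OF assms])

lemma set_pmf_sample_path: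
  "p \<in> set_pmf (sample_path \<pi> n k) \<Longrightarrow> \<exists>m. p = n @ m \<and> length m = k"
proof (induction k arbitrary: n)
  case (Suc k)
  then obtain a where "p \<in> set_pmf (sample_path \<pi> (n @ [a]) k)"
    by auto
  from Suc.IH[OF this] obtain m where "p = n @ [a] @ m" "length m = k"
    by auto
  then show ?case
    by (intro exI[of _ "a # m"]) simp
qed simp

lemma policy_mult_pmf_sample_path:
  assumes "is_policy \<pi>" "length m = k"
  shows "\<pi> n * pmf (sample_path \<pi> n k) (n @ m) = \<pi> (n @ m)"
  using assms(2)
proof (induction k arbitrary: n m)
  case (Suc k)
  then obtain b m' where m: "m = b # m'" "length m' = k"
    by (cases m) auto
  have "pmf (sample_path \<pi> (n @ [a]) k) (n @ m) = 0" if "a \<noteq> b" for a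
    using that m by (auto simp: pmf_eq_0_set_pmf dest!: set_pmf_sample_path)
  then have "pmf (sample_path \<pi> n (Suc k)) (n @ m)
      = pmf (sample_path \<pi> (n @ [b]) k) (n @ m) * pmf (cond_pmf \<pi> n) b"
    by (simp add: pmf_bind) (subst integral_measure_pmf_real[of "{b}"]; auto)
  then have "\<pi> n * pmf (sample_path \<pi> n (Suc k)) (n @ m)
      = (\<pi> n * pmf (cond_pmf \<pi> n) b) * pmf (sample_path \<pi> (n @ [b]) k) ((n @ [b]) @ m')"
    using m by simp
  also have "\<dots> = \<pi> (n @ [b]) * pmf (sample_path \<pi> (n @ [b]) k) ((n @ [b]) @ m')"
    by (simp only: policy_mult_pmf_cond_pmf[OF assms(1)])
  also have "\<dots> = \<pi> (n @ m)"
    using Suc.IH[OF m(2), of "n @ [b]"] m by simp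
  finally show ?case .
qed simp

lemma map_pmf_take_sample_path:
  "map_pmf (take (length n + j)) (sample_path \<pi> n (j + k)) = sample_path \<pi> n j"
proof (induction j arbitrary: n)
  case 0
  have "map_pmf (take (length n)) (sample_path \<pi> n k) = map_pmf (\<lambda>_. n) (sample_path \<pi> n k)"
    by (rule map_pmf_cong) (auto dest: set_pmf_sample_path)
  then show ?case
    by simp
next
  case (Suc j)
  then show ?case
    using Suc.IH[of "n @ [_]"] by (simp add: map_bind_pmf)
qed

lemma prob_sample_path_prefix:
  assumes "is_policy \<pi>" "length n \<le> k"
  shows "measure_pmf.prob (sample_path \<pi> [] k) {p. take (length n) p = n} = \<pi> n"
proof -
  have "measure_pmf.prob (sample_path \<pi> [] k) {p. take (length n) p = n}
      = measure_pmf.prob (map_pmf (take (length n)) (sample_path \<pi> [] k)) {n}"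
    by (simp add: vimage_def)
  also have "map_pmf (take (length n)) (sample_path \<pi> [] k) = sample_path \<pi> [] (length n)"
    using map_pmf_take_sample_path[of "[]" "length n" \<pi> "k - length n"] assms(2) by simp
  also have "measure_pmf.prob (sample_path \<pi> [] (length n)) {n} = pmf (sample_path \<pi> [] (length n)) n"
    by (rule measure_pmf_single)
  also have "\<dots> = \<pi> n"
    using policy_mult_pmf_sample_path[OF assms(1), of n "length n" "[]"] assms(1)
    by (simp add: policy_root[OF assms(1)])
  finally show ?thesis .
qed

lemma target_set_prefix_eq:
  assumes "n1 \<in> target_set T s0 G" "n2 \<in> target_set T s0 G" "prefix n1 n2"
  shows "n1 = n2"
proof (rule ccontr)
  assume "n1 \<noteq> n2"
  with assms(3) have "strict_prefix n1 n2"
    unfolding strict_prefix_def by blast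
  with assms(1,2) show False
    unfolding target_set_def by blast
qed

lemma target_set_take_eq:
  assumes "n1 \<in> target_set T s0 G" "n2 \<in> target_set T s0 G"
    and "take (length n1) p = n1" "take (length n2) p = n2"
  shows "n1 = n2"
proof -
  have "prefix n1 p" "prefix n2 p"
    using take_is_prefix assms(3,4) by metis+
  then have "prefix n1 n2 \<or> prefix n2 n1"
    by (rule prefix_same_cases)
  with assms(1,2) show ?thesis
    using target_set_prefix_eq by metis
qed

lemma pi_plus_le_prob_trial_success:
  assumes "is_policy \<pi>"
  shows "pi_plus \<pi> T s0 G D \<le> measure_pmf.prob (trial_pmf \<pi> D) {p. trial_success T s0 G D p}"
proof -
  define S where "S = {n \<in> target_set T s0 G. ell n \<le> D}"
  define A where "A = (\<lambda>n::'a list. {p. take (length n) p = n})"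
  have "finite S"
    by (rule finite_subset[OF _ finite_lists_length_le[of UNIV D]]) (auto simp: S_def ell_def)
  moreover have "disjoint_family_on A S"
    unfolding disjoint_family_on_def
  proof (intro ballI impI)
    fix n1 n2
    assume "n1 \<in> S" "n2 \<in> S" "n1 \<noteq> n2"
    then show "A n1 \<inter> A n2 = {}"
      using target_set_take_eq[of n1 T s0 G n2] by (auto simp: A_def S_def)
  qed
  moreover have "pi_plus \<pi> T s0 G D = (\<Sum>n\<in>S. measure_pmf.prob (trial_pmf \<pi> D) (A n))"
    unfolding pi_plus_def S_def[symmetric] A_def trial_pmf_def
    by (rule sum.cong[OF refl], rule prob_sample_path_prefix[OF assms, symmetric])
      (auto simp: S_def ell_def)
  ultimately have "pi_plus \<pi> T s0 G D = measure_pmf.prob (trial_pmf \<pi> D) (\<Union>n\<in>S. A n)"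
    by (simp add: measure_pmf.finite_measure_finite_Union)
  also have "\<dots> \<le> measure_pmf.prob (trial_pmf \<pi> D) {p. trial_success T s0 G D p}"
  proof (rule measure_pmf.finite_measure_mono)
    show "(\<Union>n\<in>S. A n) \<subseteq> {p. trial_success T s0 G D p}"
    proof safe
      fix n p
      assume "n \<in> S" "p \<in> A n"
      then show "trial_success T s0 G D p"
        unfolding trial_success_def S_def A_def target_set_def ell_def
        by (intro exI[of _ "length n"]) auto
    qed
  qed simp
  finally show ?thesis .
qed

lemma trial_cost_le: "trial_cost T s0 G D p \<le> D"
proof (cases "trial_success T s0 G D p")
  case True
  then have "(LEAST i. i < D \<and> node_state T s0 (take i p) \<in> G) < D"
    unfolding trial_success_def by (metis (mono_tags, lifting) LeastI_ex)
  with True show ?thesis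
    by (simp add: trial_cost_def)
qed (simp add: trial_cost_def)

lemma multiTS_expansions_le:
  assumes "D \<ge> 1"
  shows "multiTS_expansions T s0 G D \<omega>
    \<le> of_nat D * waiting_time {p. \<not> trial_success T s0 G D p} \<omega>"
proof (cases "\<exists>k. trial_success T s0 G D (\<omega> !! k)")
  case True
  define K where "K = (LEAST k. trial_success T s0 G D (\<omega> !! k))"
  have "multiTS_expansions T s0 G D \<omega> = (\<Sum>j\<le>K. of_nat (trial_cost T s0 G D (\<omega> !! j)))"
    using True by (simp add: multiTS_expansions_def K_def)
  also have "\<dots> \<le> (\<Sum>j\<le>K. of_nat D)"
    by (intro sum_mono) (simp add: trial_cost_le)
  also have "\<dots> = of_nat D * waiting_time {p. \<not> trial_success T s0 G D p} \<omega>"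
    using True by (simp add: waiting_time_eq K_def mult.commute)
  finally show ?thesis .
next
  case False
  with assms show ?thesis
    by (simp add: multiTS_expansions_def waiting_time_eq ennreal_mult_top)
qed

lemma nn_integral_multiTS_expansions_le:
  fixes P :: "'a list pmf" and T :: "'s \<Rightarrow> 'a \<Rightarrow> 's" and s0 :: 's and G :: "'s set" and D :: nat
  defines "q \<equiv> measure_pmf.prob P {p. trial_success T s0 G D p}"
  assumes "D \<ge> 1" "q > 0"
  shows "(\<integral>\<^sup>+\<omega>. multiTS_expansions T s0 G D \<omega> \<partial>stream_space (measure_pmf P))
    \<le> of_nat D * ennreal (1 / q)"
proof -
  define F where "F = {p. \<not> trial_success T s0 G D p}"
  have "F = space (measure_pmf P) - {p. trial_success T s0 G D p}"
    by (auto simp: F_def)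
  then have prob_F: "measure_pmf.prob P F = 1 - q"
    unfolding q_def by (simp only: measure_pmf.prob_compl sets_measure_pmf UNIV_I)
  have "(\<integral>\<^sup>+\<omega>. multiTS_expansions T s0 G D \<omega> \<partial>stream_space (measure_pmf P))
      \<le> (\<integral>\<^sup>+\<omega>. of_nat D * waiting_time F \<omega> \<partial>stream_space (measure_pmf P))"
    unfolding F_def by (intro nn_integral_mono multiTS_expansions_le assms(2))
  also have "\<dots> = of_nat D * ennreal (1 / q)"
    using prob_F assms(3)
    by (simp add: nn_integral_cmult measurable_waiting_time measure_pmf.nn_integral_waiting_time)
  finally show ?thesis .
qed

theorem theorem4:
  fixes \<pi> :: "'a::finite list \<Rightarrow> real" and T :: "'s \<Rightarrow> 'a \<Rightarrow> 's"
    and s0 :: 's and G :: "'s set" and D :: nat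
  assumes "is_policy \<pi>" and "D \<ge> 1"
  shows "(\<integral>\<^sup>+ \<omega>. multiTS_expansions T s0 G D \<omega> \<partial>stream_space (measure_pmf (trial_pmf \<pi> D)))
           \<le> ennreal (real D) / ennreal (pi_plus \<pi> T s0 G D)"
proof (cases "pi_plus \<pi> T s0 G D = 0")
  case True
  with assms(2) show ?thesis
    by simp
next
  case False
  define q where "q = measure_pmf.prob (trial_pmf \<pi> D) {p. trial_success T s0 G D p}"
  have "0 \<le> pi_plus \<pi> T s0 G D"
    unfolding pi_plus_def by (intro sum_nonneg policy_nonneg[OF assms(1)])
  with False have pos: "0 < pi_plus \<pi> T s0 G D"
    by simp
  have le_q: "pi_plus \<pi> T s0 G D \<le> q"
    unfolding q_def by (rule pi_plus_le_prob_trial_success[OF assms(1)])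
  have "(\<integral>\<^sup>+\<omega>. multiTS_expansions T s0 G D \<omega> \<partial>stream_space (measure_pmf (trial_pmf \<pi> D)))
      \<le> of_nat D * ennreal (1 / q)"
    using pos le_q unfolding q_def by (intro nn_integral_multiTS_expansions_le assms(2)) simp
  also have "\<dots> \<le> ennreal (real D / pi_plus \<pi> T s0 G D)"
    using pos le_q
    by (simp add: ennreal_of_nat_eq_real_of_nat divide_left_mono flip: ennreal_mult)
  also have "\<dots> = ennreal (real D) / ennreal (pi_plus \<pi> T s0 G D)"
    using pos by (simp add: divide_ennreal)
  finally show ?thesis .
qed

end
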